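(* Let $\Gamma$ be block-finite and $\mathbb G,\mathbb G^*$ as below. Suppose $\hat x\in\mathrm{Range}_1(\mathbb G^* )$, $x\in\mathbb G(\hat x)$, and $f\in\langle\Gamma\rangle$ is an $m$-ary function with $\arg\min f=\mathbb G(\hat x)$. Then $(a,\dots,a)\in\mathrm{dom} f$ for every $a\in\{x_1,\dots,x_m\}$.
   Context: $D$ finite, $m\ge2$, cost functions $f:D^n\to\mathbb Q\cup\{\infty\}$, $\mathrm{dom} f=\{x:f(x)<\infty\}$. Block-finite: $D$ partitioned into $\{D_v:v\in V\}$ with (a) for each $a\in D_v$ a unary $g_a:D\to D$ mapping $\mathrm{dom} f$ into itself for all $f\in\Gamma$, $g_a(b)=a$ for $b\in D_v$; (b) $\mathrm{dom} f\in\Gamma$ for $f\in\Gamma$ and equality $=_D\in\Gamma$; (c) each $n$-ary $f\in\Gamma\setminus\{=_D\}$ has $\mathrm{dom} f\subseteq D_{v_1}\times\dots\times D_{v_n}$. $\langle\Gamma\rangle$: functions $f(x_1,\dots,x_k)=\min_{x_{k+1},\dots,x_N}f_{\mathcal I}(x_1,\dots,x_N)$ for $\mathrm{VCSP}(\Gamma)$ objectives $f_{\mathcal I}$. Maps $\mathbf g=(g_1,\dots,g_m):D^m\to D^m$ act on $[D^n]^m$ coordinatewise; $f^m(x)=\frac1m\sum f(x^i)$; generalized fractional polymorphism of arity $m\to m$: finitely supported distribution $\rho$ on maps with $\sum\rho(\mathbf g)f^m(\mathbf g(x))\le f^m(x)$ for $f\in\Gamma$, $x\in[\mathrm{dom}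 f]^m$. $\Omega=\{\mathbf g:(g_{\pi(1)},\dots,g_{\pi(m)})(x)=\mathbf g(x_{\pi(1)},\dots,x_{\pi(m)})\ \forall x\in D^m,\pi\}$. $\omega$: generalized fractional polymorphism of arity $m\to m$ with support in $\Omega$ containing the support of every other such. $\mathbb G=\{\mathbf g_k\circ\dots\circ\mathbf g_1:k\ge0,\mathbf g_i\in\mathrm{supp}(\omega)\}$; $E=\{(\mathbf g,\mathbf h\circ\mathbf g):\mathbf g\in\mathbb G,\mathbf h\in\mathrm{supp}(\omega)\}$; $\mathbb G^*$ the union of strongly connected components of $(\mathbb G,E)$ without outgoing edges; $\mathrm{Range}_1(\mathbb G^* )=\{\mathbf g(y):\mathbf g\in\mathbb G^*,y\in D^m\}$; $\mathbb G(\hat x)=\{\mathbf g(\hat x):\mathbf g\in\mathbb G\}$. *)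

theory Defs
  imports "HOL-Library.Extended_Real" "HOL-Combinatorics.Permutations"
begin

text \<open>A cost function of arity n on domain 'a is represented as a pair (n, f), where
  f maps tuples (lists of length n) to rationals or +infinity; lists of other length get
  the junk value +infinity, so that the representation is canonical.\<close>
type_synonym 'a cost = "nat \<times> ('a list \<Rightarrow> ereal)"

definition wf_cost :: "'a cost \<Rightarrow> bool" where
  "wf_cost F \<longleftrightarrow> (\<forall>xs. length xs \<noteq> fst F \<longrightarrow> snd F xs = \<infinity>)
     \<and> (\<forall>xs. snd F xs = \<infinity> \<or> (\<exists>q::rat. snd F xs = ereal (of_rat q)))"

definition cost_language :: "'a cost set \<Rightarrow> bool" where
  "cost_language \<Gamma> \<longleftrightarrow> (\<forall>F\<in>\<Gamma>. wf_cost F)"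

definition cdom :: "'a cost \<Rightarrow> 'a list set" where
  "cdom F = {xs. snd F xs < \<infinity>}"

definition dom_cost :: "'a cost \<Rightarrow> 'a cost" where
  "dom_cost F = (fst F, \<lambda>xs. if snd F xs < \<infinity> then 0 else \<infinity>)"

definition eq_cost :: "'a cost" where
  "eq_cost = (2, \<lambda>xs. if length xs = 2 \<and> xs ! 0 = xs ! 1 then 0 else \<infinity>)"

text \<open>Block-finiteness; the partition {D_v} is given by the block map blk (D_v = fibre of v).\<close>
definition block_finite :: "'a cost set \<Rightarrow> ('a \<Rightarrow> 'b) \<Rightarrow> bool" where
  "block_finite \<Gamma> blk \<longleftrightarrow>
     (\<forall>a. \<exists>ga::'a \<Rightarrow> 'a. (\<forall>F\<in>\<Gamma>. \<forall>xs\<in>cdom F. map ga xs \<in> cdom F)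
                        \<and> (\<forall>b. blk b = blk a \<longrightarrow> ga b = a))
   \<and> (\<forall>F\<in>\<Gamma>. dom_cost F \<in> \<Gamma>) \<and> eq_cost \<in> \<Gamma>
   \<and> (\<forall>F\<in>\<Gamma> - {eq_cost}. \<exists>vs. length vs = fst F \<and>
          (\<forall>xs\<in>cdom F. \<forall>i<fst F. blk (xs ! i) = vs ! i))"

definition vcsp_instance :: "'a cost set \<Rightarrow> nat \<Rightarrow> ('a cost \<times> nat list) list \<Rightarrow> bool" where
  "vcsp_instance \<Gamma> N I \<longleftrightarrow>
     (\<forall>t\<in>set I. fst t \<in> \<Gamma> \<and> length (snd t) = fst (fst t) \<and> (\<forall>i\<in>set (snd t). i < N))"

definition inst_obj :: "('a cost \<times> nat list) list \<Rightarrow> (nat \<Rightarrow> 'a) \<Rightarrow> ereal" where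
  "inst_obj I s = (\<Sum>t\<leftarrow>I. snd (fst t) (map s (snd t)))"

text \<open>The expressive power \<langle>\<Gamma>\<rangle>: minimise the objective over the variables k..N-1.\<close>
definition expr_clone :: "'a cost set \<Rightarrow> 'a cost set" where
  "expr_clone \<Gamma> = {F. \<exists>k N I. k \<le> N \<and> vcsp_instance \<Gamma> N I \<and>
      F = (k, \<lambda>xs. if length xs = k
                    then (INF s\<in>{s. \<forall>i<k. s i = xs ! i}. inst_obj I s) else \<infinity>)}"

definition argmin_cost :: "'a cost \<Rightarrow> 'a list set" where
  "argmin_cost F = {xs. length xs = fst F \<and> snd F xs < \<infinity> \<and>
      (\<forall>ys. length ys = fst F \<longrightarrow> snd F xs \<le> snd F ys)}"

text \<open>Maps D^m \<rightarrow> D^m, canonically represented: length-m lists to length-m lists,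
  all other lists to [].\<close>
type_synonym 'a mmap = "'a list \<Rightarrow> 'a list"

definition valid_map :: "nat \<Rightarrow> 'a mmap \<Rightarrow> bool" where
  "valid_map m g \<longleftrightarrow> (\<forall>xs. (length xs = m \<longrightarrow> length (g xs) = m) \<and> (length xs \<noteq> m \<longrightarrow> g xs = []))"

text \<open>Coordinatewise action of g on X = (x^1,...,x^m) \<in> [D^n]^m.\<close>
definition apply_map :: "nat \<Rightarrow> nat \<Rightarrow> 'a mmap \<Rightarrow> 'a list list \<Rightarrow> 'a list list" where
  "apply_map m n g X = map (\<lambda>i. map (\<lambda>j. g (map (\<lambda>r. r ! j) X) ! i) [0..<n]) [0..<m]"

definition fpow :: "nat \<Rightarrow> 'a cost \<Rightarrow> 'a list list \<Rightarrow> ereal" where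
  "fpow m F X = (\<Sum>i<m. snd F (X ! i)) / ereal (real m)"

definition supp :: "('a mmap \<Rightarrow> real) \<Rightarrow> 'a mmap set" where
  "supp \<rho> = {g. \<rho> g \<noteq> 0}"

definition gen_frac_pol :: "nat \<Rightarrow> 'a cost set \<Rightarrow> ('a mmap \<Rightarrow> real) \<Rightarrow> bool" where
  "gen_frac_pol m \<Gamma> \<rho> \<longleftrightarrow> finite (supp \<rho>) \<and> (\<forall>g. \<rho> g \<ge> 0) \<and> (\<forall>g\<in>supp \<rho>. valid_map m g)
     \<and> (\<Sum>g\<in>supp \<rho>. \<rho> g) = 1
     \<and> (\<forall>F\<in>\<Gamma>. \<forall>X. length X = m \<and> (\<forall>x\<in>set X. x \<in> cdom F) \<longrightarrow>
          (\<Sum>g\<in>supp \<rho>. ereal (\<rho> g) * fpow m F (apply_map m (fst F) g X)) \<le> fpow m F X)"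

definition Omega :: "nat \<Rightarrow> 'a mmap set" where
  "Omega m = {g. valid_map m g \<and> (\<forall>\<pi>. \<pi> permutes {..<m} \<longrightarrow>
      (\<forall>x. length x = m \<longrightarrow> (\<forall>i<m. g x ! (\<pi> i) = g (map (\<lambda>j. x ! (\<pi> j)) [0..<m]) ! i)))}"

definition is_omega :: "nat \<Rightarrow> 'a cost set \<Rightarrow> ('a mmap \<Rightarrow> real) \<Rightarrow> bool" where
  "is_omega m \<Gamma> \<omega> \<longleftrightarrow> gen_frac_pol m \<Gamma> \<omega> \<and> supp \<omega> \<subseteq> Omega m \<and>
     (\<forall>\<rho>. gen_frac_pol m \<Gamma> \<rho> \<and> supp \<rho> \<subseteq> Omega m \<longrightarrow> supp \<rho> \<subseteq> supp \<omega>)"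

definition id_map :: "nat \<Rightarrow> 'a mmap" where
  "id_map m = (\<lambda>xs. if length xs = m then xs else [])"

inductive_set GG :: "nat \<Rightarrow> ('a mmap \<Rightarrow> real) \<Rightarrow> 'a mmap set" for m \<omega> where
  GG_id: "id_map m \<in> GG m \<omega>"
| GG_step: "g \<in> GG m \<omega> \<Longrightarrow> h \<in> supp \<omega> \<Longrightarrow> h \<circ> g \<in> GG m \<omega>"

definition GE :: "nat \<Rightarrow> ('a mmap \<Rightarrow> real) \<Rightarrow> ('a mmap \<times> 'a mmap) set" where
  "GE m \<omega> = {(g, h \<circ> g) | g h. g \<in> GG m \<omega> \<and> h \<in> supp \<omega>}"

definition scc :: "('v \<times> 'v) set \<Rightarrow> 'v \<Rightarrow> 'v set" where
  "scc E v = {w. (v, w) \<in> E\<^sup>* \<and> (w, v) \<in> E\<^sup>*}"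

definition GG_star :: "nat \<Rightarrow> ('a mmap \<Rightarrow> real) \<Rightarrow> 'a mmap set" where
  "GG_star m \<omega> = \<Union>{C. \<exists>g\<in>GG m \<omega>. C = scc (GE m \<omega>) g \<and>
                        (\<forall>(u, v)\<in>GE m \<omega>. u \<in> C \<longrightarrow> v \<in> C)}"

definition Range1 :: "nat \<Rightarrow> 'a mmap set \<Rightarrow> 'a list set" where
  "Range1 m S = {g y | g y. g \<in> S \<and> length y = m}"

definition orbit :: "nat \<Rightarrow> ('a mmap \<Rightarrow> real) \<Rightarrow> 'a list \<Rightarrow> 'a list set" where
  "orbit m \<omega> xh = {g xh | g. g \<in> GG m \<omega>}"

end

theory Submission
  imports Defs
begin

text \<open>Write x = g y with g in a terminal strongly connected component of the composition graph.
  The map that sends every m-tuple meeting two blocks to a fixed constant tuple and fixes all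
  other tuples is a symmetric polymorphism of a block-finite language, so it lies in the support
  of \<open>\<omega>\<close>.  Composing it with g stays inside the terminal component, hence some path
  leads back to g; since symmetric maps send constant tuples to constant tuples, x would be
  constant if it met two blocks.  So all entries of x lie in one block, and for each entry a the
  unary map g_a sends x to (a,\<dots>,a) while preserving the domain of every function
  expressible over \<Gamma>.\<close>

lemma valid_map_GG:
  assumes "\<forall>h\<in>supp \<omega>. valid_map m h" "m > 0" "g \<in> GG m \<omega>"
  shows "valid_map m g"
  using assms(3)
proof induction
  case GG_id
  then show ?case by (auto simp: valid_map_def id_map_def)
next
  case (GG_step g h)
  then have "valid_map m h" using assms(1) by blast
  with GG_step.IH \<open>m > 0\<close> show ?case
    unfolding valid_map_def by (metis comp_apply list.size(3) less_irrefl)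
qed

lemma id_map_comp:
  assumes "valid_map m g" "m > 0"
  shows "id_map m \<circ> g = g"
proof
  fix z show "(id_map m \<circ> g) z = g z"
    using assms unfolding valid_map_def id_map_def by (cases "length z = m") auto
qed

lemma rtrancl_GE_GG:
  assumes "(u, v) \<in> (GE m \<omega>)\<^sup>*" "u \<in> GG m \<omega>"
  shows "v \<in> GG m \<omega>"
  using assms by induction (auto simp: GE_def intro: GG.GG_step)

lemma GG_comp_reachable:
  assumes "\<forall>h\<in>supp \<omega>. valid_map m h" "m > 0" "k \<in> GG m \<omega>" "g \<in> GG m \<omega>"
  shows "(g, k \<circ> g) \<in> (GE m \<omega>)\<^sup>*"
  using assms(3)
proof induction
  case GG_id
  then show ?case using id_map_comp[OF valid_map_GG[OF assms(1,2,4)] assms(2)] by simp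
next
  case (GG_step k h)
  have "k \<circ> g \<in> GG m \<omega>" using GG_step.IH assms(4) by (rule rtrancl_GE_GG)
  then have "(k \<circ> g, h \<circ> (k \<circ> g)) \<in> GE m \<omega>" using GG_step.hyps(2) unfolding GE_def by blast
  with GG_step.IH have "(g, h \<circ> (k \<circ> g)) \<in> (GE m \<omega>)\<^sup>*" by (rule rtrancl_into_rtrancl)
  then show ?case by (simp only: comp_assoc)
qed

lemma GG_star_subset_GG: "GG_star m \<omega> \<subseteq> GG m \<omega>"
proof
  fix g assume "g \<in> GG_star m \<omega>"
  then obtain g1 where "g1 \<in> GG m \<omega>" "(g1, g) \<in> (GE m \<omega>)\<^sup>*"
    unfolding GG_star_def scc_def by blast
  then show "g \<in> GG m \<omega>" using rtrancl_GE_GG by blast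
qed

lemma GG_star_reachable:
  assumes "g \<in> GG_star m \<omega>" "(g, g') \<in> (GE m \<omega>)\<^sup>*"
  shows "g' \<in> GG_star m \<omega>" and "(g', g) \<in> (GE m \<omega>)\<^sup>*"
proof -
  obtain g1 where g1: "g1 \<in> GG m \<omega>" and g: "g \<in> scc (GE m \<omega>) g1"
    and closed: "GE m \<omega> `` scc (GE m \<omega>) g1 \<subseteq> scc (GE m \<omega>) g1"
    using assms(1) unfolding GG_star_def by blast
  have "g' \<in> (GE m \<omega>)\<^sup>* `` scc (GE m \<omega>) g1" using g assms(2) by blast
  then have g': "g' \<in> scc (GE m \<omega>) g1" by (simp only: Image_closed_trancl[OF closed])
  then show "g' \<in> GG_star m \<omega>" using g1 closed unfolding GG_star_def by blast
  have "(g', g1) \<in> (GE m \<omega>)\<^sup>*" "(g1, g) \<in> (GE m \<omega>)\<^sup>*" using g g' by (simp_all add: scc_def)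
  then show "(g', g) \<in> (GE m \<omega>)\<^sup>*" by (rule rtrancl_trans)
qed

lemma orbit_Range1_GG_star:
  assumes "\<forall>h\<in>supp \<omega>. valid_map m h" "m > 0"
    "xh \<in> Range1 m (GG_star m \<omega>)" "x \<in> orbit m \<omega> xh"
  obtains g y where "g \<in> GG_star m \<omega>" "length y = m" "x = g y"
proof -
  obtain g0 y where g0: "g0 \<in> GG_star m \<omega>" and y: "length y = m" "xh = g0 y"
    using assms(3) unfolding Range1_def by blast
  obtain k where k: "k \<in> GG m \<omega>" "x = k xh" using assms(4) unfolding orbit_def by blast
  have "(g0, k \<circ> g0) \<in> (GE m \<omega>)\<^sup>*"
    using GG_comp_reachable[OF assms(1,2) k(1)] g0 GG_star_subset_GG by blast
  then have "k \<circ> g0 \<in> GG_star m \<omega>" by (rule GG_star_reachable(1)[OF g0])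
  then show thesis using that y k(2) by simp
qed

lemma Omega_replicate:
  assumes "h \<in> Omega m" "m \<ge> 2"
  obtains c' where "h (replicate m c) = replicate m c'"
proof -
  let ?w = "h (replicate m c)"
  have sym: "\<And>\<pi> x i. \<pi> permutes {..<m} \<Longrightarrow> length x = m \<Longrightarrow> i < m \<Longrightarrow>
      h x ! (\<pi> i) = h (map (\<lambda>j. x ! (\<pi> j)) [0..<m]) ! i"
    and len: "length ?w = m"
    using assms(1) unfolding Omega_def valid_map_def by auto
  have first: "?w ! i = ?w ! 0" if "i < m" for i
  proof -
    have p: "transpose 0 i permutes {..<m}" using that assms(2) by (intro permutes_swap_id) auto
    have "map (\<lambda>j. replicate m c ! transpose 0 i j) [0..<m] = replicate m c"
    proof (rule nth_equalityI)
      fix j assume "j < length (map (\<lambda>j. replicate m c ! transpose 0 i j) [0..<m])"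
      moreover from this have "transpose 0 i j < m" using permutes_in_image[OF p, of j] by simp
      ultimately show "map (\<lambda>j. replicate m c ! transpose 0 i j) [0..<m] ! j = replicate m c ! j"
        by simp
    qed simp
    then show ?thesis using sym[OF p, of "replicate m c" 0] assms(2) by simp
  qed
  have "?w = replicate m (?w ! 0)"
  proof (rule nth_equalityI)
    fix k assume "k < length ?w"
    then show "?w ! k = replicate m (?w ! 0) ! k" using first[of k] len by simp
  qed (use len in simp)
  then show thesis by (rule that)
qed

lemma rtrancl_GE_replicate:
  assumes "(u, v) \<in> (GE m \<omega>)\<^sup>*" "supp \<omega> \<subseteq> Omega m" "m \<ge> 2" "\<exists>c. u z = replicate m c"
  shows "\<exists>c. v z = replicate m c"
  using assms(1,4)
proof induction
  case (step v w)
  obtain h where w: "w = h \<circ> v" and h: "h \<in> Omega m"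
    using step.hyps(2) assms(2) unfolding GE_def by blast
  obtain c where "v z = replicate m c" using step.IH step.prems by blast
  moreover obtain c' where "h (replicate m c) = replicate m c'"
    using Omega_replicate[OF h assms(3)] .
  ultimately show ?case using w by auto
qed

definition multi_block :: "('a \<Rightarrow> 'b) \<Rightarrow> 'a list \<Rightarrow> bool" where
  "multi_block blk z \<longleftrightarrow> (\<exists>u\<in>set z. \<exists>v\<in>set z. blk u \<noteq> blk v)"

definition collapse :: "('a \<Rightarrow> 'b) \<Rightarrow> nat \<Rightarrow> 'a \<Rightarrow> 'a mmap" where
  "collapse blk m c z =
     (if length z = m then if multi_block blk z then replicate m c else z else [])"

lemma valid_map_collapse: "valid_map m (collapse blk m c)"
  unfolding valid_map_def collapse_def by auto

lemma set_permute_list: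
  assumes "\<pi> permutes {..<m}" "length x = m"
  shows "set (map (\<lambda>j. x ! \<pi> j) [0..<m]) = set x"
proof -
  have "set (map (\<lambda>j. x ! \<pi> j) [0..<m]) = (!) x ` \<pi> ` {..<m}"
    by (auto simp: image_image atLeast0LessThan)
  also have "\<dots> = (!) x ` {..<m}" using permutes_image[OF assms(1)] by simp
  also have "\<dots> = set x" using assms(2) by (auto simp: set_conv_nth)
  finally show ?thesis .
qed

lemma collapse_Omega: "collapse blk m c \<in> Omega m"
  unfolding Omega_def
proof (intro CollectI conjI allI impI valid_map_collapse)
  fix \<pi> and x :: "'a list" and i
  assume p: "\<pi> permutes {..<m}" and x: "length x = m" and i: "i < m"
  have "\<pi> i < m" using permutes_in_image[OF p] i by simp
  moreover have "multi_block blk (map (\<lambda>j. x ! \<pi> j) [0..<m]) \<longleftrightarrow> multi_block blk x"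
    unfolding multi_block_def set_permute_list[OF p x] ..
  ultimately show "collapse blk m c x ! \<pi> i = collapse blk m c (map (\<lambda>j. x ! \<pi> j) [0..<m]) ! i"
    using i x unfolding collapse_def by simp
qed

lemma apply_map_nth:
  "i < m \<Longrightarrow> apply_map m n g X ! i = map (\<lambda>j. g (map (\<lambda>r. r ! j) X) ! i) [0..<n]"
  unfolding apply_map_def by simp

lemma cdom_length: "wf_cost F \<Longrightarrow> r \<in> cdom F \<Longrightarrow> length r = fst F"
  unfolding wf_cost_def cdom_def by force

text \<open>Columns of tuples of points of dom f lie in single blocks, so collapse fixes them; the
  equality relation is not block-restricted, but its two columns coincide.\<close>
lemma collapse_row_le:
  assumes "cost_language \<Gamma>" "block_finite \<Gamma> blk" "F \<in> \<Gamma>" "length X = m"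
    "\<forall>r\<in>set X. r \<in> cdom F" "i < m"
  shows "snd F (apply_map m (fst F) (collapse blk m c) X ! i) \<le> snd F (X ! i)"
proof -
  define col where "col j = map (\<lambda>r. r ! j) X" for j
  have row: "apply_map m (fst F) (collapse blk m c) X ! i
       = map (\<lambda>j. collapse blk m c (col j) ! i) [0..<fst F]"
    unfolding col_def using assms(6) by (rule apply_map_nth)
  show ?thesis
  proof (cases "F = eq_cost")
    case True
    then have "length r = 2 \<and> r ! 0 = r ! 1" if "r \<in> set X" for r
      using assms(5) that unfolding cdom_def eq_cost_def by (auto split: if_splits)
    then have "col 0 = col 1" unfolding col_def by (intro map_cong) auto
    moreover have "[0..<2] = [0, 1::nat]" by (simp add: upt_rec)
    ultimately show ?thesis using row True by (simp add: eq_cost_def)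
  next
    case False
    then obtain vs where vs: "\<forall>xs\<in>cdom F. \<forall>j<fst F. blk (xs ! j) = vs ! j"
      using assms(2,3) unfolding block_finite_def by blast
    have "collapse blk m c (col j) = col j" if "j < fst F" for j
      using vs that assms(4,5) unfolding collapse_def multi_block_def col_def by auto
    then have "apply_map m (fst F) (collapse blk m c) X ! i = map (\<lambda>j. col j ! i) [0..<fst F]"
      using row by simp
    also have "\<dots> = X ! i"
    proof -
      have "wf_cost F" using assms(1,3) unfolding cost_language_def by blast
      moreover have "X ! i \<in> cdom F" using assms(4-6) by simp
      ultimately have "length (X ! i) = fst F" by (rule cdom_length)
      then show ?thesis unfolding col_def using assms(4,6) by (intro nth_equalityI) auto
    qed
    finally show ?thesis by simp
  qed
qed

lemma gen_frac_pol_single: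
  assumes "valid_map m g" "m > 0"
    "\<And>F X i. F \<in> \<Gamma> \<Longrightarrow> length X = m \<Longrightarrow> \<forall>r\<in>set X. r \<in> cdom F \<Longrightarrow> i < m \<Longrightarrow>
       snd F (apply_map m (fst F) g X ! i) \<le> snd F (X ! i)"
  shows "gen_frac_pol m \<Gamma> (\<lambda>h. if h = g then 1 else 0)"
proof -
  have supp: "supp (\<lambda>h. if h = g then 1 else 0 :: real) = {g}" unfolding supp_def by auto
  have "fpow m F (apply_map m (fst F) g X) \<le> fpow m F X"
    if "F \<in> \<Gamma>" "length X = m" "\<forall>r\<in>set X. r \<in> cdom F" for F X
    unfolding fpow_def using assms(2)
    by (intro ereal_divide_right_mono sum_mono assms(3)[OF that]) auto
  then show ?thesis unfolding gen_frac_pol_def supp using assms(1) by simp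
qed

lemma collapse_in_supp_omega:
  assumes "is_omega m \<Gamma> \<omega>" "cost_language \<Gamma>" "block_finite \<Gamma> blk" "m \<ge> 2"
  shows "collapse blk m c \<in> supp \<omega>"
proof -
  let ?\<rho> = "\<lambda>h. if h = collapse blk m c then 1 else 0 :: real"
  have maximal: "\<And>\<rho>. gen_frac_pol m \<Gamma> \<rho> \<Longrightarrow> supp \<rho> \<subseteq> Omega m \<Longrightarrow> supp \<rho> \<subseteq> supp \<omega>"
    using assms(1) unfolding is_omega_def by blast
  have supp: "supp ?\<rho> = {collapse blk m c}" unfolding supp_def by auto
  have "gen_frac_pol m \<Gamma> ?\<rho>"
    using assms(4) collapse_row_le[OF assms(2,3)]
    by (intro gen_frac_pol_single valid_map_collapse) auto
  then have "supp ?\<rho> \<subseteq> supp \<omega>" by (rule maximal) (simp add: supp collapse_Omega)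
  then show ?thesis by (simp add: supp)
qed

lemma GG_star_image_single_block:
  assumes "is_omega m \<Gamma> \<omega>" "cost_language \<Gamma>" "block_finite \<Gamma> blk" "m \<ge> 2"
    "g \<in> GG_star m \<omega>" "length (g y) = m"
  shows "\<not> multi_block blk (g y)"
proof
  assume multi: "multi_block blk (g y)"
  let ?h = "collapse blk m undefined"
  have "?h \<in> supp \<omega>" using collapse_in_supp_omega assms(1-4) .
  then have "(g, ?h \<circ> g) \<in> GE m \<omega>" using assms(5) GG_star_subset_GG unfolding GE_def by blast
  then have "(?h \<circ> g, g) \<in> (GE m \<omega>)\<^sup>*" using assms(5) GG_star_reachable(2) by blast
  moreover have "supp \<omega> \<subseteq> Omega m" using assms(1) unfolding is_omega_def by blast
  moreover have "(?h \<circ> g) y = replicate m undefined"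
    using multi assms(6) unfolding collapse_def by simp
  ultimately obtain c where "g y = replicate m c" using rtrancl_GE_replicate assms(4) by blast
  then show False using multi unfolding multi_block_def by simp
qed

lemma wf_cost_not_MInfty: "wf_cost F \<Longrightarrow> snd F xs \<noteq> - \<infinity>"
  unfolding wf_cost_def by (metis MInfty_neq_PInfty(1) MInfty_neq_ereal(1))

lemma inst_obj_less_PInfty_iff:
  assumes "cost_language \<Gamma>" "\<forall>t\<in>set I. fst t \<in> \<Gamma>"
  shows "inst_obj I s < \<infinity> \<longleftrightarrow> (\<forall>t\<in>set I. map s (snd t) \<in> cdom (fst t))"
proof -
  have "inst_obj I s \<noteq> - \<infinity> \<and> (inst_obj I s < \<infinity> \<longleftrightarrow> (\<forall>t\<in>set I. map s (snd t) \<in> cdom (fst t)))"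
    using assms(2)
  proof (induction I)
    case Nil
    then show ?case by (simp add: inst_obj_def)
  next
    case (Cons t I)
    have "wf_cost (fst t)" using Cons.prems assms(1) unfolding cost_language_def by simp
    then have "snd (fst t) (map s (snd t)) \<noteq> - \<infinity>" by (rule wf_cost_not_MInfty)
    moreover have "inst_obj (t # I) s = snd (fst t) (map s (snd t)) + inst_obj I s"
      unfolding inst_obj_def by simp
    ultimately show ?case using Cons unfolding cdom_def
      by (cases "snd (fst t) (map s (snd t))"; cases "inst_obj I s") auto
  qed
  then show ?thesis ..
qed

lemma expr_clone_cdom_map:
  assumes "cost_language \<Gamma>" "\<forall>G\<in>\<Gamma>. \<forall>xs\<in>cdom G. map ga xs \<in> cdom G"
    "F \<in> expr_clone \<Gamma>" "xs \<in> cdom F"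
  shows "map ga xs \<in> cdom F"
proof -
  obtain k N I where inst: "vcsp_instance \<Gamma> N I" and F:
    "F = (k, \<lambda>xs. if length xs = k then (INF s\<in>{s. \<forall>i<k. s i = xs ! i}. inst_obj I s) else \<infinity>)"
    using assms(3) unfolding expr_clone_def by blast
  have terms: "\<forall>t\<in>set I. fst t \<in> \<Gamma>" using inst unfolding vcsp_instance_def by blast
  have "length xs = k" and "(INF s\<in>{s. \<forall>i<k. s i = xs ! i}. inst_obj I s) < \<infinity>"
    using assms(4) unfolding F cdom_def by (auto split: if_splits)
  then have "\<exists>s\<in>{s. \<forall>i<k. s i = xs ! i}. inst_obj I s < \<infinity>" by (simp only: INF_less_iff)
  then obtain s where s: "\<forall>i<k. s i = xs ! i" and fin: "inst_obj I s < \<infinity>" by blast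
  note finite_iff = inst_obj_less_PInfty_iff[OF assms(1) terms]
  have "map ga (map s (snd t)) \<in> cdom (fst t)" if "t \<in> set I" for t
    using fin that assms(2) terms unfolding finite_iff by blast
  then have "inst_obj I (ga \<circ> s) < \<infinity>" unfolding finite_iff by simp
  moreover have "ga \<circ> s \<in> {s. \<forall>i<k. s i = map ga xs ! i}" using s \<open>length xs = k\<close> by simp
  ultimately have "(INF s\<in>{s. \<forall>i<k. s i = map ga xs ! i}. inst_obj I s) < \<infinity>"
    by (meson INF_lower le_less_trans)
  then show ?thesis using \<open>length xs = k\<close> unfolding F cdom_def by simp
qed

theorem lemma7p4:
  fixes \<Gamma> :: "'a::finite cost set" and blk :: "'a \<Rightarrow> 'b" and m :: nat
    and \<omega> :: "'a mmap \<Rightarrow> real" and xh x :: "'a list" and F :: "'a cost"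
  assumes "m \<ge> 2"
    and "cost_language \<Gamma>"
    and "block_finite \<Gamma> blk"
    and "is_omega m \<Gamma> \<omega>"
    and "xh \<in> Range1 m (GG_star m \<omega>)"
    and "x \<in> orbit m \<omega> xh"
    and "F \<in> expr_clone \<Gamma>" and "fst F = m"
    and "argmin_cost F = orbit m \<omega> xh"
  shows "\<forall>a\<in>set x. replicate m a \<in> cdom F"
proof
  fix a assume a: "a \<in> set x"
  have valid: "\<forall>h\<in>supp \<omega>. valid_map m h"
    using assms(4) unfolding is_omega_def gen_frac_pol_def by blast
  obtain g y where g: "g \<in> GG_star m \<omega>" and y: "length y = m" and x: "x = g y"
    using orbit_Range1_GG_star[OF valid _ assms(5,6)] assms(1) by auto
  have "length x = m"
    using valid_map_GG[OF valid] g GG_star_subset_GG y assms(1) unfolding x valid_map_def by auto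
  have single: "\<not> multi_block blk x"
    using GG_star_image_single_block[OF assms(4,2,3,1) g] \<open>length x = m\<close> unfolding x by blast
  obtain ga where ga: "\<forall>G\<in>\<Gamma>. \<forall>xs\<in>cdom G. map ga xs \<in> cdom G" "\<forall>b. blk b = blk a \<longrightarrow> ga b = a"
    using assms(3) unfolding block_finite_def by blast
  have "\<forall>b\<in>set x. ga b = a" using single a ga(2) unfolding multi_block_def by blast
  then have "map ga x = replicate m a"
    using \<open>length x = m\<close> by (simp add: map_replicate_const cong: map_cong)
  moreover have "x \<in> cdom F" using assms(6,9) unfolding argmin_cost_def cdom_def by blast
  ultimately show "replicate m a \<in> cdom F" using expr_clone_cdom_map[OF assms(2) ga(1) assms(7)] by metis
qed

end
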